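(* Let $\mathcal{G}=(\mathcal{N}\cup\{0\},\mathcal{E})$ be a tree (radial distribution network) with root (substation) bus $0$, and for each bus $i\in\mathcal{N}$ let $\mathcal{E}_i\subseteq\mathcal{E}$ be the set of lines on the unique path from bus $0$ to bus $i$. For each line $(\zeta,\xi)\in\mathcal{E}$ and each pair of phases $\varphi,\phi\in\{a,b,c\}$ let $z^{\varphi\phi}_{\zeta\xi}\in\mathbb{C}$ be the (self- or mutual) impedance entry of that line, and for buses $i,j$ set $$Z^{\varphi\phi}_{ij}=\sum_{(\zeta,\xi)\in\mathcal{E}_i\cap\mathcal{E}_j} z^{\varphi\phi}_{\zeta\xi}.$$ Let $\omega=e^{-\mathfrak{i}2\pi/3}$ (with $\mathfrak{i}=\sqrt{-1}$), and identify the phases $a,b,c$ with $0,1,2$ when forming $\varphi-\phi$. For buses $i,j$ and phases $\varphi,\phi$ define $$\partial_{p_j^{\phi}}v_i^{\varphi}=2\,\mathrm{Re}\{\overline{Z}^{\varphi\phi}_{ij}\,\omega^{\varphi-\phi}\},\qquad \partial_{q_j^{\phi}}v_i^{\varphi}=-2\,\mathrm{Im}\{\overline{Z}^{\varphi\phi}_{ij}\,\omega^{\varphi-\phi}\},$$ where the bar denotes complex conjugation. Let $\mathcal{N}_k$ and $\mathcal{N}_h$ be the node sets of two non-overlapping (disjoint) subtrees of $\mathcal{G}$ not containing bus $0$, with root buses $n_k^0$ and $n_h^0$ respectively. Then for every $i\in\mathcal{N}_k$, every $j\in\mathcal{N}_h$, and all phases $\varphi,\phi$, $$\partial_{p_j^{\phi}}v_i^{\varphi}=\partial_{p_{n_h^0}^{\phi}}v_{n_k^0}^{\varphi}=2\,\mathrm{Re}\{\overline{Z}^{\varphi\phi}_{n_k^0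 n_h^0}\,\omega^{\varphi-\phi}\},\qquad \partial_{q_j^{\phi}}v_i^{\varphi}=\partial_{q_{n_h^0}^{\phi}}v_{n_k^0}^{\varphi}=-2\,\mathrm{Im}\{\overline{Z}^{\varphi\phi}_{n_k^0 n_h^0}\,\omega^{\varphi-\phi}\}.$$
   Context: A subtree of a tree consists of a node of the tree, all of this node's descendants (with respect to the tree rooted at bus $0$), and the connecting lines among them; that node is the root bus of the subtree. The quantities $\partial_{p_j^{\phi}}v_i^{\varphi}$ and $\partial_{q_j^{\phi}}v_i^{\varphi}$ are the entries of the sensitivity matrices of a linearized multi-phase power flow model $\bm v=\mathbf R\bm p+\mathbf X\bm q+\tilde{\bm v}$ relating squared voltage magnitudes $v_i^\varphi$ to real and reactive power injections $p_j^\phi,q_j^\phi$ (obtained assuming negligible line losses, approximately equal three-phase voltage magnitudes and phase differences close to $2\pi/3$); in the claim they are defined directly by the stated formulas. *)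

theory Defs
  imports Complex_Main
begin

text \<open>A radial network (tree) with buses N \<union> {0}, rooted at bus 0, is encoded by its
  parent map par: every bus i in N is joined by the line (par i, i) to its parent
  par i \<in> N \<union> {0}, and iterating par from any bus reaches the root 0.
  The lines are E = {(par i, i) | i \<in> N}.\<close>

definition rooted_tree :: "nat set \<Rightarrow> (nat \<Rightarrow> nat) \<Rightarrow> bool" where
  "rooted_tree N par \<longleftrightarrow> finite N \<and> 0 \<notin> N \<and>
     (\<forall>i\<in>N. par i \<in> N \<union> {0}) \<and> (\<forall>i\<in>N. \<exists>n. (par ^^ n) i = 0)"

definition on_path :: "(nat \<Rightarrow> nat) \<Rightarrow> nat \<Rightarrow> nat \<Rightarrow> bool" where
  "on_path par k i \<longleftrightarrow> (\<exists>n. (par ^^ n) i = k \<and> (\<forall>m<n. (par ^^ m) i \<noteq> 0))"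

definition path_lines :: "nat set \<Rightarrow> (nat \<Rightarrow> nat) \<Rightarrow> nat \<Rightarrow> (nat \<times> nat) set" where
  "path_lines N par i = {(par k, k) | k. k \<in> N \<and> on_path par k i}"

definition subtree_nodes :: "nat set \<Rightarrow> (nat \<Rightarrow> nat) \<Rightarrow> nat \<Rightarrow> nat set" where
  "subtree_nodes N par r = {i \<in> N. on_path par r i}"

text \<open>Phases a,b,c are identified with 0,1,2; z e \<phi> \<psi> is the impedance entry of line e.\<close>
definition Zmat :: "nat set \<Rightarrow> (nat \<Rightarrow> nat) \<Rightarrow> (nat \<times> nat \<Rightarrow> nat \<Rightarrow> nat \<Rightarrow> complex)
    \<Rightarrow> nat \<Rightarrow> nat \<Rightarrow> nat \<Rightarrow> nat \<Rightarrow> complex" where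
  "Zmat N par z i j \<phi> \<psi> = (\<Sum>e \<in> path_lines N par i \<inter> path_lines N par j. z e \<phi> \<psi>)"

definition omega :: complex where
  "omega = exp (- \<i> * complex_of_real (2 * pi / 3))"

definition dv_dp :: "nat set \<Rightarrow> (nat \<Rightarrow> nat) \<Rightarrow> (nat \<times> nat \<Rightarrow> nat \<Rightarrow> nat \<Rightarrow> complex)
    \<Rightarrow> nat \<Rightarrow> nat \<Rightarrow> nat \<Rightarrow> nat \<Rightarrow> real" where
  "dv_dp N par z i \<phi> j \<psi> =
     2 * Re (cnj (Zmat N par z i j \<phi> \<psi>) * omega powi (int \<phi> - int \<psi>))"

definition dv_dq :: "nat set \<Rightarrow> (nat \<Rightarrow> nat) \<Rightarrow> (nat \<times> nat \<Rightarrow> nat \<Rightarrow> nat \<Rightarrow> complex)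
    \<Rightarrow> nat \<Rightarrow> nat \<Rightarrow> nat \<Rightarrow> nat \<Rightarrow> real" where
  "dv_dq N par z i \<phi> j \<psi> =
     - 2 * Im (cnj (Zmat N par z i j \<phi> \<psi>) * omega powi (int \<phi> - int \<psi>))"

end

theory Submission
  imports Defs
begin

text \<open>The lines shared by the root paths of two buses are exactly the lines above their
  deepest common ancestor. If i lies below rk and j below rh, where the subtrees at rk and
  rh are disjoint, then neither root is an ancestor of the other, and since the ancestors
  of a bus form a chain, every common ancestor of i and j is already a common ancestor of
  rk and rh. Hence i, j and rk, rh share the same lines, the same mutual impedance Z,
  and therefore the same sensitivities.\<close>

lemma funpow_add_apply: "(f ^^ (m + n)) x = (f ^^ m) ((f ^^ n) x)"
  by (simp add: funpow_add)

lemma on_path_refl: "on_path par k k"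
  unfolding on_path_def by (rule exI[of _ 0]) simp

lemma on_path_trans:
  assumes "on_path par k m" "on_path par m i"
  shows "on_path par k i"
proof -
  obtain a where a: "(par ^^ a) m = k" "\<forall>t<a. (par ^^ t) m \<noteq> 0"
    using assms(1) unfolding on_path_def by blast
  obtain b where b: "(par ^^ b) i = m" "\<forall>t<b. (par ^^ t) i \<noteq> 0"
    using assms(2) unfolding on_path_def by blast
  have "(par ^^ (a + b)) i = k"
    using a b by (simp add: funpow_add_apply)
  moreover have "(par ^^ t) i \<noteq> 0" if t: "t < a + b" for t
  proof (cases "t < b")
    case True
    then show ?thesis using b by blast
  next
    case False
    then have "(par ^^ t) i = (par ^^ (t - b)) m" and "t - b < a"
      using t b funpow_add_apply[where f=par and m="t - b" and n=b and x=i] by auto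
    then show ?thesis using a by simp
  qed
  ultimately show ?thesis unfolding on_path_def by blast
qed

lemma on_path_of_funpow_le:
  assumes "(par ^^ b) i = r" and "(par ^^ a) i = k" and "b \<le> a"
    and "\<forall>t<a. (par ^^ t) i \<noteq> 0"
  shows "on_path par k r"
  unfolding on_path_def
proof (intro exI conjI allI impI)
  show "(par ^^ (a - b)) r = k"
    using assms funpow_add_apply[where f=par and m="a - b" and n=b and x=i] by simp
  show "(par ^^ t) r \<noteq> 0" if "t < a - b" for t
  proof -
    have "(par ^^ t) r = (par ^^ (t + b)) i"
      using assms(1) funpow_add_apply[where f=par and m=t and n=b and x=i] by simp
    moreover have "t + b < a" using that by simp
    ultimately show ?thesis using assms(4) by simp
  qed
qed

lemma on_path_linear:
  assumes "on_path par k i" "on_path par r i"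
  shows "on_path par k r \<or> on_path par r k"
proof -
  obtain a where a: "(par ^^ a) i = k" "\<forall>t<a. (par ^^ t) i \<noteq> 0"
    using assms(1) unfolding on_path_def by blast
  obtain b where b: "(par ^^ b) i = r" "\<forall>t<b. (par ^^ t) i \<noteq> 0"
    using assms(2) unfolding on_path_def by blast
  show ?thesis
  proof (cases "b \<le> a")
    case True
    then show ?thesis using on_path_of_funpow_le a b by blast
  next
    case False
    then show ?thesis using on_path_of_funpow_le[where b=a and r=k and a=b and k=r] a b by simp
  qed
qed

lemma disjoint_subtrees_root_not_on_path:
  assumes "subtree_nodes N par rk \<inter> subtree_nodes N par rh = {}" and "rh \<in> N"
  shows "\<not> on_path par rk rh"
  using assms on_path_refl[of par rh] unfolding subtree_nodes_def by blast

lemma ancestor_in_other_subtree_not_below_root: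
  assumes disj: "subtree_nodes N par rk \<inter> subtree_nodes N par rh = {}"
    and "rh \<in> N" "k \<in> N" and "on_path par k j" "on_path par rh j"
  shows "\<not> on_path par rk k"
proof
  assume rk_k: "on_path par rk k"
  from assms(4,5) consider "on_path par k rh" | "on_path par rh k"
    using on_path_linear by blast
  then show False
  proof cases
    case 1
    then show False
      using rk_k on_path_trans disjoint_subtrees_root_not_on_path[OF disj \<open>rh \<in> N\<close>] by blast
  next
    case 2
    then show False using rk_k disj \<open>k \<in> N\<close> unfolding subtree_nodes_def by blast
  qed
qed

lemma common_ancestor_below_disjoint_subtrees:
  assumes disj: "subtree_nodes N par rk \<inter> subtree_nodes N par rh = {}"
    and "rk \<in> N" "rh \<in> N" "k \<in> N"
    and "on_path par rk i" "on_path par rh j" "on_path par k i" "on_path par k j"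
  shows "on_path par k rk \<and> on_path par k rh"
proof -
  have "\<not> on_path par rk k"
    using ancestor_in_other_subtree_not_below_root[OF disj] assms by blast
  moreover have "\<not> on_path par rh k"
    using ancestor_in_other_subtree_not_below_root[of N par rh rk] disj assms
    by (simp add: Int_commute)
  ultimately show ?thesis
    using on_path_linear assms(5-8) by blast
qed

lemma path_lines_Int_disjoint_subtrees:
  assumes disj: "subtree_nodes N par rk \<inter> subtree_nodes N par rh = {}"
    and "rk \<in> N" "rh \<in> N"
    and "i \<in> subtree_nodes N par rk" "j \<in> subtree_nodes N par rh"
  shows "path_lines N par i \<inter> path_lines N par j = path_lines N par rk \<inter> path_lines N par rh"
proof -
  have rk_i: "on_path par rk i" and rh_j: "on_path par rh j"
    using assms(4,5) unfolding subtree_nodes_def by auto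
  have "on_path par k i \<and> on_path par k j \<longleftrightarrow> on_path par k rk \<and> on_path par k rh"
    if "k \<in> N" for k
    using common_ancestor_below_disjoint_subtrees[OF disj assms(2,3) that rk_i rh_j]
      on_path_trans rk_i rh_j by blast
  then show ?thesis
    unfolding path_lines_def by blast
qed

theorem mainTheorem1:
  fixes N :: "nat set" and par :: "nat \<Rightarrow> nat"
    and z :: "nat \<times> nat \<Rightarrow> nat \<Rightarrow> nat \<Rightarrow> complex"
    and rk rh i j \<phi> \<psi> :: nat
  assumes tree: "rooted_tree N par"
    and rk: "rk \<in> N" and rh: "rh \<in> N"
    and disj: "subtree_nodes N par rk \<inter> subtree_nodes N par rh = {}"
    and i: "i \<in> subtree_nodes N par rk" and j: "j \<in> subtree_nodes N par rh"
    and ph: "\<phi> < 3" "\<psi> < 3"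
  shows "dv_dp N par z i \<phi> j \<psi> = dv_dp N par z rk \<phi> rh \<psi>
       \<and> dv_dp N par z rk \<phi> rh \<psi> =
           2 * Re (cnj (Zmat N par z rk rh \<phi> \<psi>) * omega powi (int \<phi> - int \<psi>))
       \<and> dv_dq N par z i \<phi> j \<psi> = dv_dq N par z rk \<phi> rh \<psi>
       \<and> dv_dq N par z rk \<phi> rh \<psi> =
           - 2 * Im (cnj (Zmat N par z rk rh \<phi> \<psi>) * omega powi (int \<phi> - int \<psi>))"
proof -
  have "Zmat N par z i j \<phi> \<psi> = Zmat N par z rk rh \<phi> \<psi>"
    unfolding Zmat_def using path_lines_Int_disjoint_subtrees[OF disj rk rh i j] by simp
  then show ?thesis
    unfolding dv_dp_def dv_dq_def by simp
qed

end
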